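(* Let ${\bf u}\in\mathcal A^{\mathbb N}$ have its language closed under reversal. If $D({\bf u})<+\infty$, then there exists an integer $K$ such that every bispecial factor $w$ of ${\bf u}$ with $|w|\ge K$ satisfies $m(w)=0$ if $w\ne\widetilde w$, and $m(w)=\#E^=(w)-1$ if $w=\widetilde w$.
   Context: $\widetilde w$ is the reversal of $w$. Palindromic defect: for a finite word $w$ of length $n$, $D(w)=n+1-$(number of distinct palindromic factors of $w$, including the empty word), and $D({\bf u})=\sup D(w)$ over factors of ${\bf u}$. The language is closed under reversal if the reversal of every factor is a factor. For a factor $w$: $E^+(w)=\{b: wb\text{ factor}\}$, $E^-(w)=\{a: aw\text{ factor}\}$, $E(w)=\{(a,b): awb\text{ factor}\}$, $E^=(w)=\{a: awa\text{ factor}\}$, $m(w)=\#E(w)-\#E^+(w)-\#E^-(w)+1$. A factor is bispecial if $\#E^-(w)\ge2$ and $\#E^+(w)\ge 2$. *)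

theory Defs
  imports Main "HOL-Library.Sublist"
begin

definition is_factor :: "(nat \<Rightarrow> 'a) \<Rightarrow> 'a list \<Rightarrow> bool" where
  "is_factor u w \<longleftrightarrow> (\<exists>i. w = map u [i..<i + length w])"

definition closed_under_reversal :: "(nat \<Rightarrow> 'a) \<Rightarrow> bool" where
  "closed_under_reversal u \<longleftrightarrow> (\<forall>w. is_factor u w \<longrightarrow> is_factor u (rev w))"

(* palindromic factors of a finite word, including the empty word *)
definition pal_factors :: "'a list \<Rightarrow> 'a list set" where
  "pal_factors w = {p. sublist p w \<and> rev p = p}"

definition defect :: "'a list \<Rightarrow> int" where
  "defect w = int (length w) + 1 - int (card (pal_factors w))"

definition finite_defect :: "(nat \<Rightarrow> 'a) \<Rightarrow> bool" where
  "finite_defect u \<longleftrightarrow> (\<exists>B::int. \<forall>w. is_factor u w \<longrightarrow> defect w \<le> B)"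

definition ext_right :: "(nat \<Rightarrow> 'a) \<Rightarrow> 'a list \<Rightarrow> 'a set" where
  "ext_right u w = {b. is_factor u (w @ [b])}"

definition ext_left :: "(nat \<Rightarrow> 'a) \<Rightarrow> 'a list \<Rightarrow> 'a set" where
  "ext_left u w = {a. is_factor u (a # w)}"

definition ext_both :: "(nat \<Rightarrow> 'a) \<Rightarrow> 'a list \<Rightarrow> ('a \<times> 'a) set" where
  "ext_both u w = {(a, b). is_factor u (a # w @ [b])}"

definition ext_eq :: "(nat \<Rightarrow> 'a) \<Rightarrow> 'a list \<Rightarrow> 'a set" where
  "ext_eq u w = {a. is_factor u (a # w @ [a])}"

definition bilateral_mult :: "(nat \<Rightarrow> 'a) \<Rightarrow> 'a list \<Rightarrow> int" where
  "bilateral_mult u w = int (card (ext_both u w)) - int (card (ext_right u w))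
                        - int (card (ext_left u w)) + 1"

definition bispecial :: "(nat \<Rightarrow> 'a) \<Rightarrow> 'a list \<Rightarrow> bool" where
  "bispecial u w \<longleftrightarrow> is_factor u w \<and> card (ext_left u w) \<ge> 2 \<and> card (ext_right u w) \<ge> 2"

end

theory Submission
  imports Defs
begin

text \<open>Finite defect makes the defect of the prefixes of \<open>u\<close> eventually constant, so from some
  length on every prefix ends with a palindrome occurring nowhere earlier in it. With closure under
  reversal this forces, for every long enough \<open>w\<close>, each complete return word of \<open>{w, rev w}\<close> to be a
  palindrome. Consequently, the walk that runs through the successive occurrences of \<open>w\<close> and
  \<open>rev w\<close>, entering each by its left extension and leaving by its right extension, retraces every
  step it takes: it explores a tree whose vertices are the one-sided extensions and whose edges are
  the bilateral extensions of \<open>w\<close> (left and right extensions being identified when \<open>w\<close> is a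
  palindrome). Comparing the number of edges with the number of vertices yields \<open>m(w)\<close>.\<close>

section \<open>Palindromic defect of finite words\<close>

lemma finite_pal_factors: "finite (pal_factors w)"
proof (rule finite_subset)
  show "pal_factors w \<subseteq> set (sublists w)" by (auto simp: pal_factors_def)
qed simp

definition new_pal_suffixes :: "'a list \<Rightarrow> 'a \<Rightarrow> 'a list set" where
  "new_pal_suffixes y c = {s. suffix s (y @ [c]) \<and> rev s = s \<and> \<not> sublist s y}"

text \<open>Of two palindromic suffixes, the shorter one is also a prefix of the longer, hence it
  already occurs before the last letter.\<close>
lemma card_new_pal_suffixes_le_1: "card (new_pal_suffixes y c) \<le> 1"
proof -
  have shorter_old: "sublist s y"
    if "suffix s t" "s \<noteq> t" "suffix t (y @ [c])" "rev s = s" "rev t = t" for s t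
  proof -
    obtain z where t: "t = z @ s" using \<open>suffix s t\<close> by (auto simp: suffix_def)
    hence "t = s @ rev z" using that(4,5) by (metis rev_append rev_rev_ident)
    moreover have "rev z \<noteq> []" using t that(2) by simp
    ultimately obtain z' d where "t = (s @ z') @ [d]" by (metis append_assoc rev_exhaust)
    hence "suffix (s @ z') y" using \<open>suffix t (y @ [c])\<close> by (auto simp: suffix_def)
    thus "sublist s y" by (meson sublist_append_rightI sublist_order.order_trans suffix_imp_sublist)
  qed
  have "s = t" if "s \<in> new_pal_suffixes y c" "t \<in> new_pal_suffixes y c" for s t
    using that suffix_same_cases[of s "y @ [c]" t] shorter_old[of s t] shorter_old[of t s]
    by (auto simp: new_pal_suffixes_def)
  thus ?thesis by (metis One_nat_def card.infinite card_le_Suc0_iff_eq zero_le_one)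
qed

lemma pal_factors_snoc:
  "pal_factors (y @ [c]) = pal_factors y \<union> new_pal_suffixes y c"
  by (auto simp: pal_factors_def new_pal_suffixes_def sublist_snoc)

lemma defect_snoc: "defect (y @ [c]) = defect y + 1 - int (card (new_pal_suffixes y c))"
proof -
  have "finite (new_pal_suffixes y c)"
    using finite_pal_factors[of "y @ [c]"] pal_factors_snoc by (metis finite_Un)
  moreover have "pal_factors y \<inter> new_pal_suffixes y c = {}"
    by (auto simp: pal_factors_def new_pal_suffixes_def)
  ultimately show ?thesis
    by (simp add: defect_def pal_factors_snoc card_Un_disjoint finite_pal_factors)
qed

lemma defect_snoc_ge: "defect y \<le> defect (y @ [c])"
  using defect_snoc[of y c] card_new_pal_suffixes_le_1[of y c] by linarith

lemma new_pal_suffix_if_defect_snoc_eq: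
  assumes "defect (y @ [c]) = defect y"
  shows "\<exists>s. suffix s (y @ [c]) \<and> rev s = s \<and> \<not> sublist s y"
proof -
  have "new_pal_suffixes y c \<noteq> {}" using assms defect_snoc[of y c] by auto
  thus ?thesis by (auto simp: new_pal_suffixes_def)
qed

lemma eventually_const_if_mono_bounded:
  fixes f :: "nat \<Rightarrow> int"
  assumes "mono f" and "\<And>n. f n \<le> B"
  shows "\<exists>n0. \<forall>n\<ge>n0. f n = f n0"
proof -
  have "f 0 \<le> f n" for n using monoD[OF assms(1)] by simp
  hence "range f \<subseteq> {f 0..B}" using assms(2) by auto
  hence fin: "finite (range f)" using finite_subset by blast
  obtain n0 where "f n0 = Max (range f)" using Max_in[OF fin] by auto
  hence "f n \<le> f n0" for n using fin by simp
  thus ?thesis using monoD[OF assms(1)] by (meson antisym)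
qed

definition seg :: "(nat \<Rightarrow> 'a) \<Rightarrow> nat \<Rightarrow> nat \<Rightarrow> 'a list" where
  "seg u i n = map u [i..<i + n]"

lemma length_seg [simp]: "length (seg u i n) = n"
  by (simp add: seg_def)

lemma nth_seg [simp]: "t < n \<Longrightarrow> seg u i n ! t = u (i + t)"
  by (simp add: seg_def)

lemma seg_eq_iff: "seg u i n = seg u j n \<longleftrightarrow> (\<forall>t<n. u (i + t) = u (j + t))"
  by (auto simp: list_eq_iff_nth_eq)

lemma seg_eq_rev_iff: "seg u i n = rev (seg u j n) \<longleftrightarrow> (\<forall>t<n. u (i + t) = u (j + n - 1 - t))"
  by (auto simp: list_eq_iff_nth_eq rev_nth)

lemma rev_seg_eq_iff: "rev (seg u i n) = seg u i n \<longleftrightarrow> (\<forall>t<n. u (i + t) = u (i + n - 1 - t))"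
  by (metis seg_eq_rev_iff)

lemma seg_add: "seg u i (m + n) = seg u i m @ seg u (i + m) n"
  using upt_add_eq_append[of i "i + m" n] by (simp add: seg_def add.assoc)

lemma seg_Suc: "seg u i (Suc n) = seg u i n @ [u (i + n)]"
  using seg_add[of u i n 1] by (simp add: seg_def)

lemma seg_Suc_Cons: "seg u i (Suc n) = u i # seg u (Suc i) n"
  by (simp add: seg_def upt_conv_Cons del: upt_Suc)

lemma drop_seg: "k \<le> n \<Longrightarrow> drop k (seg u i n) = seg u (i + k) (n - k)"
  by (simp add: seg_def drop_map)

lemma is_factor_iff_seg: "is_factor u w \<longleftrightarrow> (\<exists>i. w = seg u i (length w))"
  by (simp add: is_factor_def seg_def)

lemma sublist_seg:
  assumes "i \<le> k" and "k + l \<le> i + n"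
  shows "sublist (seg u k l) (seg u i n)"
proof -
  have "seg u i n = seg u i (k - i) @ seg u k l @ seg u (k + l) (i + n - k - l)"
    using assms seg_add[of u i "k - i" "l + (i + n - k - l)"] seg_add[of u k l "i + n - k - l"]
    by simp
  thus ?thesis by (metis sublist_appendI)
qed

section \<open>Unioccurrent palindromic suffixes\<close>

definition unioccurrent_pal_suffix :: "(nat \<Rightarrow> 'a) \<Rightarrow> nat \<Rightarrow> nat \<Rightarrow> nat \<Rightarrow> bool" where
  "unioccurrent_pal_suffix u q L l \<longleftrightarrow> l \<le> L \<and>
     rev (seg u (q + L - l) l) = seg u (q + L - l) l \<and>
     (\<forall>k. q \<le> k \<longrightarrow> k + l < q + L \<longrightarrow> seg u k l \<noteq> seg u (q + L - l) l)"

lemma unioccurrent_pal_suffix_shrink: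
  assumes "unioccurrent_pal_suffix u q L l" and "l \<le> L'" and "L' \<le> L"
  shows "unioccurrent_pal_suffix u (q + L - L') L' l"
  using assms by (auto simp: unioccurrent_pal_suffix_def)

lemma prefixes_eventually_unioccurrent_pal_suffix:
  assumes "finite_defect u"
  shows "\<exists>n0. \<forall>j>n0. \<exists>l. unioccurrent_pal_suffix u 0 j l"
proof -
  obtain B where B: "\<And>w. is_factor u w \<Longrightarrow> defect w \<le> B"
    using assms by (auto simp: finite_defect_def)
  define D where "D j = defect (seg u 0 j)" for j
  have "mono D"
    unfolding mono_iff_le_Suc by (simp add: D_def seg_Suc defect_snoc_ge)
  moreover have "D j \<le> B" for j
    unfolding D_def by (rule B) (auto simp: is_factor_iff_seg)
  ultimately obtain n0 where n0: "\<And>j. n0 \<le> j \<Longrightarrow> D j = D n0"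
    using eventually_const_if_mono_bounded by blast
  have step: "\<exists>l. unioccurrent_pal_suffix u 0 (Suc j) l" if "n0 \<le> j" for j
  proof -
    have "D (Suc j) = D j" using n0[of j] n0[of "Suc j"] that by simp
    hence "defect (seg u 0 j @ [u j]) = defect (seg u 0 j)" by (simp only: D_def seg_Suc add_0)
    moreover have "seg u 0 (Suc j) = seg u 0 j @ [u j]" by (simp only: seg_Suc add_0)
    ultimately obtain s where s: "suffix s (seg u 0 (Suc j))" "rev s = s" "\<not> sublist s (seg u 0 j)"
      using new_pal_suffix_if_defect_snoc_eq by metis
    define l where "l = length s"
    have "l \<le> Suc j" using suffix_length_le[OF s(1)] by (simp add: l_def)
    have "s = drop (Suc j - l) (seg u 0 (Suc j))"
      using s(1) by (metis l_def suffix_take append_take_drop_id length_seg same_append_eq)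
    hence s_eq: "s = seg u (Suc j - l) l" using \<open>l \<le> Suc j\<close> by (simp add: drop_seg)
    have "seg u k l \<noteq> s" if "k + l < Suc j" for k
      using s(3) sublist_seg[of 0 k l j u] that by auto
    thus ?thesis
      using s(2) s_eq \<open>l \<le> Suc j\<close> by (auto simp: unioccurrent_pal_suffix_def)
  qed
  show ?thesis
  proof (rule exI[of _ n0], intro allI impI)
    fix j assume "n0 < j"
    then obtain j' where "j = Suc j'" "n0 \<le> j'" by (cases j) auto
    thus "\<exists>l. unioccurrent_pal_suffix u 0 j l" using step by blast
  qed
qed

definition rich_occurrences_beyond :: "(nat \<Rightarrow> 'a) \<Rightarrow> nat \<Rightarrow> bool" where
  "rich_occurrences_beyond u n0 \<longleftrightarrow> (\<forall>i L. n0 < L \<longrightarrow>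
     (\<exists>q l. seg u q L \<in> {seg u i L, rev (seg u i L)} \<and> unioccurrent_pal_suffix u q L l))"

text \<open>Take the first occurrence of a factor or of its reversal, ending at \<open>j\<close>. A unioccurrent
  palindromic suffix of the prefix of length \<open>j\<close> cannot be longer than the factor: reflected
  in it, the occurrence would end before \<open>j\<close>.\<close>
lemma rich_occurrences_beyond_if_finite_defect:
  assumes "finite_defect u"
  shows "\<exists>n0. rich_occurrences_beyond u n0"
proof -
  obtain n0 where n0: "\<And>j. n0 < j \<Longrightarrow> \<exists>l. unioccurrent_pal_suffix u 0 j l"
    using prefixes_eventually_unioccurrent_pal_suffix[OF assms] by blast
  have "\<exists>q l. seg u q L \<in> {seg u i L, rev (seg u i L)} \<and> unioccurrent_pal_suffix u q L l"
    if "n0 < L" for i L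
  proof -
    define P where "P j \<longleftrightarrow> L \<le> j \<and> seg u (j - L) L \<in> {seg u i L, rev (seg u i L)}" for j
    define j where "j = (LEAST j. P j)"
    have "P (i + L)" by (simp add: P_def)
    hence Pj: "P j" and j_min: "\<And>j'. P j' \<Longrightarrow> j \<le> j'"
      unfolding j_def by (auto intro: LeastI Least_le)
    moreover have "n0 < j" using Pj that by (simp add: P_def)
    ultimately obtain l where l: "unioccurrent_pal_suffix u 0 j l" using n0 by blast
    have "l \<le> L"
    proof (rule ccontr)
      assume "\<not> l \<le> L"
      have "seg u (j - l) L = rev (seg u (j - L) L)"
        using l \<open>\<not> l \<le> L\<close> by (auto simp: unioccurrent_pal_suffix_def rev_seg_eq_iff seg_eq_rev_iff)
      hence "P (j - l + L)" using Pj by (auto simp: P_def)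
      moreover have "l \<le> j" using l by (simp add: unioccurrent_pal_suffix_def)
      hence "j - l + L < j" using \<open>\<not> l \<le> L\<close> by linarith
      ultimately show False using j_min by fastforce
    qed
    hence "unioccurrent_pal_suffix u (j - L) L l"
      using unioccurrent_pal_suffix_shrink[OF l, of L] Pj by (simp add: P_def)
    thus ?thesis using Pj P_def by blast
  qed
  thus ?thesis unfolding rich_occurrences_beyond_def by blast
qed

section \<open>Complete return words are palindromes\<close>

definition mirror_occ :: "(nat \<Rightarrow> 'a) \<Rightarrow> 'a list \<Rightarrow> nat \<Rightarrow> bool" where
  "mirror_occ u v k \<longleftrightarrow> seg u k (length v) \<in> {v, rev v}"

text \<open>The window \<open>seg u q L\<close> is a complete return word of the pair \<open>{v, rev v}\<close>.\<close>
definition return_window :: "(nat \<Rightarrow> 'a) \<Rightarrow> 'a list \<Rightarrow> nat \<Rightarrow> nat \<Rightarrow> bool" where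
  "return_window u v q L \<longleftrightarrow> length v < L \<and> mirror_occ u v q \<and> mirror_occ u v (q + L - length v) \<and>
     (\<forall>k. q < k \<longrightarrow> k < q + L - length v \<longrightarrow> \<not> mirror_occ u v k)"

lemma mirror_occ_cong: "x \<in> {v, rev v} \<Longrightarrow> mirror_occ u x k \<longleftrightarrow> mirror_occ u v k"
  by (auto simp: mirror_occ_def)

text \<open>A shorter unioccurrent palindromic suffix, or its reflection, would reappear inside the
  initial occurrence.\<close>
lemma return_length_le_unioccurrent_pal_suffix:
  assumes ret: "return_window u v q L" and pal: "unioccurrent_pal_suffix u q L l"
  shows "length v \<le> l"
proof (rule ccontr)
  define n where "n = length v"
  define S where "S = q + L - l"
  assume "\<not> length v \<le> l"
  hence "l < n" by (simp add: n_def)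
  have "n < L" and "seg u q n \<in> {v, rev v}" and "seg u (q + L - n) n \<in> {v, rev v}"
    using ret by (auto simp: return_window_def mirror_occ_def n_def)
  hence ends: "seg u q n = seg u (q + L - n) n \<or> seg u q n = rev (seg u (q + L - n) n)" by auto
  have PS: "\<And>t. t < l \<Longrightarrow> u (S + t) = u (q + L - 1 - t)"
    and uni: "\<And>k. q \<le> k \<Longrightarrow> k + l < q + L \<Longrightarrow> \<exists>t<l. u (k + t) \<noteq> u (S + t)"
    using pal by (auto simp: unioccurrent_pal_suffix_def rev_seg_eq_iff seg_eq_iff S_def)
  from ends show False
  proof
    assume "seg u q n = seg u (q + L - n) n"
    hence "u (q + n - l + t) = u (S + t)" if "t < l" for t
    proof -
      have "n - l + t < n" using that \<open>l < n\<close> by linarith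
      hence "u (q + (n - l + t)) = u (q + L - n + (n - l + t))"
        using \<open>seg u q n = seg u (q + L - n) n\<close> unfolding seg_eq_iff by blast
      moreover have "q + (n - l + t) = q + n - l + t" "q + L - n + (n - l + t) = S + t"
        using \<open>l < n\<close> \<open>n < L\<close> by (auto simp: S_def)
      ultimately show ?thesis by simp
    qed
    moreover have "q \<le> q + n - l" "q + n - l + l < q + L" using \<open>l < n\<close> \<open>n < L\<close> by auto
    ultimately show False using uni by blast
  next
    assume "seg u q n = rev (seg u (q + L - n) n)"
    hence "u (q + t) = u (S + t)" if "t < l" for t
    proof -
      have "u (q + t) = u (q + L - n + n - 1 - t)"
        using \<open>seg u q n = rev (seg u (q + L - n) n)\<close> that \<open>l < n\<close> unfolding seg_eq_rev_iff by simp
      also have "\<dots> = u (S + t)" using PS[OF that] \<open>n < L\<close> by simp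
      finally show ?thesis .
    qed
    moreover have "q + l < q + L" using \<open>l < n\<close> \<open>n < L\<close> by auto
    ultimately show False using uni[of q] by auto
  qed
qed

text \<open>The reflection of the final occurrence inside the unioccurrent palindromic suffix \<open>s\<close> is
  again an occurrence, so it is the initial one and \<open>s\<close> is the whole window.\<close>
lemma rev_seg_if_return_window:
  assumes ret: "return_window u v q L" and pal: "unioccurrent_pal_suffix u q L l"
  shows "rev (seg u q L) = seg u q L"
proof -
  define n where "n = length v"
  define S where "S = q + L - l"
  have "n \<le> l" using return_length_le_unioccurrent_pal_suffix[OF ret pal] by (simp add: n_def)
  have nL: "n < L" and first: "seg u q n \<in> {v, rev v}" and last: "seg u (q + L - n) n \<in> {v, rev v}"
    and between: "\<And>k. q < k \<Longrightarrow> k < q + L - n \<Longrightarrow> seg u k n \<notin> {v, rev v}"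
    using ret by (auto simp: return_window_def mirror_occ_def n_def)
  have lL: "l \<le> L" and PS: "\<And>t. t < l \<Longrightarrow> u (S + t) = u (q + L - 1 - t)"
    and uni: "\<And>k. q \<le> k \<Longrightarrow> k + l < q + L \<Longrightarrow> \<exists>t<l. u (k + t) \<noteq> u (S + t)"
    using pal by (auto simp: unioccurrent_pal_suffix_def rev_seg_eq_iff seg_eq_iff S_def)
  have "seg u S n = rev (seg u (q + L - n) n)"
    unfolding seg_eq_rev_iff using PS \<open>n \<le> l\<close> nL by (simp add: S_def)
  hence S_occ: "seg u S n \<in> {v, rev v}" using last by auto
  have "q \<le> S" "S \<le> q + L - n" using \<open>n \<le> l\<close> lL by (auto simp: S_def)
  then consider "S = q" | "q < S \<and> S < q + L - n" | "S = q + L - n" by linarith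
  thus ?thesis
  proof cases
    case 1
    thus ?thesis using PS lL by (simp add: rev_seg_eq_iff S_def)
  next
    case 2
    thus ?thesis using between S_occ by blast
  next
    case 3
    hence ln: "l = n" using lL \<open>n \<le> l\<close> nL by (simp add: S_def)
    hence "rev (seg u S n) = seg u S n"
      unfolding rev_seg_eq_iff using PS nL by (simp add: S_def)
    hence "seg u q n = seg u S n" using first S_occ by auto
    thus ?thesis using uni[of q] ln nL by (auto simp: seg_eq_iff)
  qed
qed

lemma return_window_copy:
  assumes eq: "seg u q L = seg u i L" and ret: "return_window u v i L"
  shows "return_window u v q L"
proof -
  define m where "m = length v"
  have occ: "mirror_occ u v (q + k) \<longleftrightarrow> mirror_occ u v (i + k)" if "k + m \<le> L" for k
  proof -
    have "seg u (q + k) m = seg u (i + k) m"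
      using eq that unfolding seg_eq_iff by (simp add: add.assoc)
    thus ?thesis by (simp add: mirror_occ_def m_def)
  qed
  have "m < L" using ret by (simp add: return_window_def m_def)
  have "\<not> mirror_occ u v k" if "q < k" "k < q + L - m" for k
    using occ[of "k - q"] ret that by (auto simp: return_window_def m_def)
  thus ?thesis
    using ret occ[of 0] occ[of "L - m"] \<open>m < L\<close> by (auto simp: return_window_def m_def)
qed

lemma return_window_mirror:
  assumes eq: "seg u q L = rev (seg u i L)" and ret: "return_window u v i L"
  shows "return_window u v q L"
proof -
  define m where "m = length v"
  have occ: "mirror_occ u v (q + k) \<longleftrightarrow> mirror_occ u v (i + L - m - k)" if "k + m \<le> L" for k
  proof -
    have "seg u (q + k) m = rev (seg u (i + L - m - k) m)"
      unfolding seg_eq_rev_iff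
    proof (intro allI impI)
      fix t assume "t < m"
      hence "u (q + (k + t)) = u (i + L - 1 - (k + t))"
        using eq that unfolding seg_eq_rev_iff by simp
      moreover have "i + L - 1 - (k + t) = i + L - m - k + m - 1 - t" using \<open>t < m\<close> that by simp
      ultimately show "u (q + k + t) = u (i + L - m - k + m - 1 - t)" by (simp add: add.assoc)
    qed
    thus ?thesis by (auto simp: mirror_occ_def m_def rev_swap)
  qed
  have "m < L" using ret by (simp add: return_window_def m_def)
  have "\<not> mirror_occ u v k" if "q < k" "k < q + L - m" for k
    using occ[of "k - q"] ret that by (auto simp: return_window_def m_def)
  thus ?thesis
    using ret occ[of 0] occ[of "L - m"] \<open>m < L\<close> by (auto simp: return_window_def m_def)
qed

lemma return_window_palindrome:
  assumes rich: "rich_occurrences_beyond u n0" and "n0 < L" and ret: "return_window u v i L"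
  shows "rev (seg u i L) = seg u i L"
proof -
  obtain q l where q: "seg u q L \<in> {seg u i L, rev (seg u i L)}"
    and pal: "unioccurrent_pal_suffix u q L l"
    using rich \<open>n0 < L\<close> unfolding rich_occurrences_beyond_def by blast
  have "return_window u v q L"
    using q return_window_copy[OF _ ret] return_window_mirror[OF _ ret] by blast
  hence "rev (seg u q L) = seg u q L" using pal by (rule rev_seg_if_return_window)
  thus ?thesis using q by (auto simp: rev_swap)
qed

lemma next_mirror_occ:
  assumes rich: "rich_occurrences_beyond u n0" and "n0 < length v"
    and "seg u i (length v) = v" and "i < j" and "mirror_occ u v j"
    and "\<And>k. i < k \<Longrightarrow> k < j \<Longrightarrow> \<not> mirror_occ u v k"
  shows "seg u j (length v) = rev v" and "u (i + length v) = u (j - 1)"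
proof -
  define m where "m = length v"
  define L where "L = j - i + m"
  have "return_window u v i L"
    using assms(3-6) by (auto simp: return_window_def mirror_occ_def m_def L_def)
  moreover have "n0 < L" using assms(2) by (simp add: L_def m_def)
  ultimately have pal: "\<And>t. t < L \<Longrightarrow> u (i + t) = u (i + L - 1 - t)"
    using return_window_palindrome[OF rich] by (simp add: rev_seg_eq_iff)
  have "u (j + t) = u (i + m - 1 - t)" if "t < m" for t
    using pal[of "m - 1 - t"] that \<open>i < j\<close> by (simp add: L_def)
  hence "seg u j m = rev (seg u i m)" by (simp add: seg_eq_rev_iff)
  thus "seg u j (length v) = rev v" using assms(3) by (simp add: m_def)
  show "u (i + length v) = u (j - 1)"
    using pal[of m] \<open>i < j\<close> by (simp add: L_def m_def)
qed

lemma first_mirror_occ_after: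
  assumes rich: "rich_occurrences_beyond u n0" and "n0 < length v"
    and "seg u i (length v) = v" and "i < p" and "mirror_occ u v p"
  obtains j where "i < j" and "seg u j (length v) = rev v" and "u (i + length v) = u (j - 1)"
    and "\<And>k. i < k \<Longrightarrow> k < j \<Longrightarrow> \<not> mirror_occ u v k"
proof -
  define j where "j = (LEAST j. i < j \<and> mirror_occ u v j)"
  have j: "i < j \<and> mirror_occ u v j"
    unfolding j_def by (rule LeastI[of _ p]) (use assms in simp)
  have before: "\<not> mirror_occ u v k" if "i < k" "k < j" for k
    using not_less_Least[of k "\<lambda>j. i < j \<and> mirror_occ u v j"] that by (simp add: j_def)
  show thesis
    using that[of j] j before next_mirror_occ[OF assms(1-3), of j] by blast
qed

section \<open>Walks that explore a tree\<close>

definition walk_vertices :: "nat set \<Rightarrow> (nat \<Rightarrow> 'v) \<Rightarrow> (nat \<Rightarrow> 'v) \<Rightarrow> 'v set" where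
  "walk_vertices Ev dep arr = dep ` Ev \<union> arr ` Ev"

definition walk_edges :: "nat set \<Rightarrow> (nat \<Rightarrow> 'v) \<Rightarrow> (nat \<Rightarrow> 'v) \<Rightarrow> 'v set set" where
  "walk_edges Ev dep arr = {{dep i, arr i} | i. i \<in> Ev \<and> dep i \<noteq> arr i}"

text \<open>Each event \<open>i \<in> Ev\<close> is a step \<open>dep i \<rightarrow> arr i\<close> of a walk. By \<open>retrace\<close>, after leaving a vertex
  \<open>x\<close> along the edge \<open>{x, y}\<close>, the walk comes back to \<open>x\<close>, if ever, first by the step \<open>y \<rightarrow> x\<close>.
  Such a walk explores a tree.\<close>
locale tree_walk =
  fixes Ev :: "nat set" and dep arr :: "nat \<Rightarrow> 'v"
  assumes Ev_nonempty: "Ev \<noteq> {}"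
    and finite_vertices: "finite (dep ` Ev \<union> arr ` Ev)"
    and chain: "\<And>i j. i \<in> Ev \<Longrightarrow> j \<in> Ev \<Longrightarrow> i < j \<Longrightarrow> {i<..<j} \<inter> Ev = {} \<Longrightarrow> arr i = dep j"
    and retrace: "\<And>d e. d \<in> Ev \<Longrightarrow> e \<in> Ev \<Longrightarrow> d < e \<Longrightarrow> dep d \<in> {dep e, arr e} \<Longrightarrow>
      \<exists>j\<in>Ev. d \<le> j \<and> arr j = dep d \<and> dep j = arr d \<and>
        (\<forall>k\<in>Ev. d < k \<longrightarrow> k < j \<longrightarrow> dep d \<notin> {dep k, arr k})"
begin

abbreviation vertices :: "'v set" where
  "vertices \<equiv> walk_vertices Ev dep arr"

abbreviation edges :: "'v set set" where
  "edges \<equiv> walk_edges Ev dep arr"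

definition visits :: "'v \<Rightarrow> nat \<Rightarrow> bool" where
  "visits y t \<longleftrightarrow> t \<in> Ev \<and> y \<in> {dep t, arr t}"

definition start :: nat where
  "start = (LEAST i. i \<in> Ev)"

lemma start_in_Ev: "start \<in> Ev" and start_le: "i \<in> Ev \<Longrightarrow> start \<le> i"
  using Ev_nonempty by (auto simp: start_def intro: LeastI Least_le)

lemma earlier_arrival:
  assumes "i \<in> Ev" and "start < i"
  obtains k where "k \<in> Ev" "k < i" "arr k = dep i"
proof -
  define K where "K = {k \<in> Ev. k < i}"
  have "finite K" "K \<noteq> {}" using start_in_Ev assms by (auto simp: K_def)
  hence "Max K \<in> K" by (rule Max_in)
  moreover have "{Max K<..<i} \<inter> Ev = {}"
  proof -
    have "k \<le> Max K" if "k \<in> Ev" "k < i" for k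
      using Max_ge[OF \<open>finite K\<close>] that by (simp add: K_def)
    thus ?thesis by fastforce
  qed
  ultimately show thesis using that chain[of "Max K" i] assms(1) by (auto simp: K_def)
qed

lemma next_departure:
  assumes "t \<in> Ev" and "p \<in> Ev" and "t < p"
  obtains k where "k \<in> Ev" "t < k" "k \<le> p" "dep k = arr t"
proof -
  define k where "k = (LEAST k. k \<in> Ev \<and> t < k)"
  have k: "k \<in> Ev \<and> t < k" unfolding k_def by (rule LeastI[of _ p]) (use assms in simp)
  have "k \<le> p" unfolding k_def by (rule Least_le) (use assms in simp)
  have "{t<..<k} \<inter> Ev = {}"
    using not_less_Least[of _ "\<lambda>k. k \<in> Ev \<and> t < k"] by (auto simp: k_def)
  thus thesis using that k \<open>k \<le> p\<close> chain[of t k] assms(1) by auto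
qed

definition first_visit :: "'v \<Rightarrow> nat" where
  "first_visit y = (LEAST t. visits y t)"

lemma first_visit_arrives:
  assumes "y \<in> vertices" and "y \<noteq> dep start"
  shows "first_visit y \<in> Ev" "arr (first_visit y) = y" "dep (first_visit y) \<noteq> y"
    and "visits y t \<Longrightarrow> first_visit y \<le> t"
proof -
  obtain t where "visits y t" using assms(1) by (auto simp: walk_vertices_def visits_def)
  hence vis: "visits y (first_visit y)" unfolding first_visit_def by (rule LeastI)
  show min: "visits y t \<Longrightarrow> first_visit y \<le> t" for t
    unfolding first_visit_def by (rule Least_le)
  show "first_visit y \<in> Ev" using vis by (simp add: visits_def)
  show "dep (first_visit y) \<noteq> y"
  proof
    assume dep: "dep (first_visit y) = y"
    hence "start \<noteq> first_visit y" using assms(2) by auto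
    hence "start < first_visit y" using start_le \<open>first_visit y \<in> Ev\<close> by fastforce
    then obtain k where "k \<in> Ev" "k < first_visit y" "arr k = y"
      using earlier_arrival \<open>first_visit y \<in> Ev\<close> dep by metis
    thus False using min[of k] by (auto simp: visits_def)
  qed
  thus "arr (first_visit y) = y" using vis by (auto simp: visits_def)
qed

lemma card_vertices_le: "card vertices \<le> card edges + 1"
proof -
  let ?e = "\<lambda>y. {dep (first_visit y), arr (first_visit y)}"
  have "?e ` (vertices - {dep start}) \<subseteq> edges"
    using first_visit_arrives by (fastforce simp: walk_edges_def)
  moreover have "inj_on ?e (vertices - {dep start})"
  proof (rule inj_onI)
    fix y y' assume y: "y \<in> vertices - {dep start}" and y': "y' \<in> vertices - {dep start}"
      and eq: "?e y = ?e y'"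
    show "y = y'"
    proof (rule ccontr)
      assume "y \<noteq> y'"
      hence "dep (first_visit y) = y'" "dep (first_visit y') = y"
        using eq y y' first_visit_arrives by (auto simp: doubleton_eq_iff)
      hence "first_visit y' \<le> first_visit y" "first_visit y \<le> first_visit y'"
        using y y' first_visit_arrives by (auto simp: visits_def)
      hence "arr (first_visit y) = arr (first_visit y')" by simp
      thus False using y y' first_visit_arrives(2) \<open>y \<noteq> y'\<close> by auto
    qed
  qed
  moreover have "finite edges"
    by (rule finite_subset[of _ "Pow vertices"])
      (use finite_vertices in \<open>auto simp: walk_edges_def walk_vertices_def\<close>)
  ultimately have "card (vertices - {dep start}) \<le> card edges"
    by (simp add: card_inj_on_le)
  moreover have "dep start \<in> vertices" using start_in_Ev by (simp add: walk_vertices_def)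
  ultimately show ?thesis using finite_vertices by (simp add: walk_vertices_def)
qed

definition first_traversal :: "'v set \<Rightarrow> nat" where
  "first_traversal c = (LEAST i. i \<in> Ev \<and> dep i \<noteq> arr i \<and> {dep i, arr i} = c)"

lemma first_traversal:
  assumes "c \<in> edges"
  shows "first_traversal c \<in> Ev" "dep (first_traversal c) \<noteq> arr (first_traversal c)"
    "{dep (first_traversal c), arr (first_traversal c)} = c"
proof -
  obtain i where "i \<in> Ev \<and> dep i \<noteq> arr i \<and> {dep i, arr i} = c"
    using assms by (auto simp: walk_edges_def)
  hence "first_traversal c \<in> Ev \<and> dep (first_traversal c) \<noteq> arr (first_traversal c) \<and>
      {dep (first_traversal c), arr (first_traversal c)} = c"
    unfolding first_traversal_def by (rule LeastI)
  thus "first_traversal c \<in> Ev" "dep (first_traversal c) \<noteq> arr (first_traversal c)"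
    "{dep (first_traversal c), arr (first_traversal c)} = c" by auto
qed

lemma first_traversal_le: "i \<in> Ev \<Longrightarrow> dep i \<noteq> arr i \<Longrightarrow> first_traversal {dep i, arr i} \<le> i"
  unfolding first_traversal_def by (rule Least_le) simp

text \<open>If \<open>y\<close> were visited before, consider the last departure \<open>d\<close> from \<open>y\<close> before the first traversal
  \<open>p\<close> of \<open>c\<close>. The walk comes back to \<open>y\<close> by the reverse of step \<open>d\<close>, no later than \<open>p\<close>; this cannot
  be \<open>p\<close> itself by minimality of \<open>p\<close>, and if it is earlier, the walk departs from \<open>y\<close> again before
  \<open>p\<close>, contradicting the choice of \<open>d\<close>.\<close>
lemma no_visit_before_first_traversal:
  assumes "c \<in> edges" and "t < first_traversal c"
  shows "\<not> visits (arr (first_traversal c)) t"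
proof
  define p where "p = first_traversal c"
  define y where "y = arr p"
  assume "visits (arr (first_traversal c)) t"
  hence t: "t \<in> Ev" "y \<in> {dep t, arr t}" by (auto simp: visits_def y_def p_def)
  have p: "p \<in> Ev" "dep p \<noteq> y" "{dep p, arr p} = c"
    using first_traversal[OF assms(1)] by (auto simp: p_def y_def)
  define DD where "DD = {d \<in> Ev. d < p \<and> dep d = y}"
  have "DD \<noteq> {}"
  proof (cases "dep t = y")
    case True
    thus ?thesis using t assms(2) by (auto simp: DD_def p_def)
  next
    case False
    then obtain k where "k \<in> Ev" "t < k" "k \<le> p" "dep k = y"
      using next_departure[OF t(1) p(1)] t assms(2) by (auto simp: p_def)
    thus ?thesis using p(2) by (auto simp: DD_def le_less)
  qed
  moreover have "finite DD" by (simp add: DD_def)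
  ultimately have d: "Max DD \<in> Ev" "Max DD < p" "dep (Max DD) = y"
    and d_max: "\<And>d. d \<in> DD \<Longrightarrow> d \<le> Max DD"
    using Max_in[of DD] by (auto simp: DD_def)
  obtain j where j: "j \<in> Ev" "Max DD \<le> j" "arr j = y" "dep j = arr (Max DD)"
    and between: "\<And>k. k \<in> Ev \<Longrightarrow> Max DD < k \<Longrightarrow> k < j \<Longrightarrow> y \<notin> {dep k, arr k}"
    using retrace[OF d(1) p(1) d(2)] d(3) by (auto simp: y_def)
  have "\<not> p < j" using between[of p] p(1) d(2) by (auto simp: y_def)
  moreover have "j \<noteq> p"
  proof
    assume "j = p"
    hence "dep (Max DD) \<noteq> arr (Max DD)" "{dep (Max DD), arr (Max DD)} = c"
      using j p d(3) by (auto simp: y_def insert_commute)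
    hence "p \<le> Max DD" using first_traversal_le[OF d(1)] by (simp add: p_def)
    thus False using d(2) by simp
  qed
  moreover have "\<not> j < p"
  proof
    assume "j < p"
    then obtain k where "k \<in> Ev" "j < k" "k \<le> p" "dep k = y"
      using next_departure[OF j(1) p(1)] j(3) by metis
    hence "k \<in> DD" using p(2) by (auto simp: DD_def le_less)
    thus False using d_max \<open>j < k\<close> j(2) by fastforce
  qed
  ultimately show False by simp
qed

lemma card_edges_le: "card edges + 1 \<le> card vertices"
proof -
  let ?y = "\<lambda>c. arr (first_traversal c)"
  have "?y ` edges \<subseteq> vertices - {dep start}"
  proof
    fix y assume "y \<in> ?y ` edges"
    then obtain c where c: "c \<in> edges" "y = ?y c" by auto
    have "y \<noteq> dep start"
    proof (cases "first_traversal c = start")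
      case True
      thus ?thesis using first_traversal[OF c(1)] c(2) by auto
    next
      case False
      hence "start < first_traversal c" using start_le first_traversal(1)[OF c(1)] by fastforce
      thus ?thesis using no_visit_before_first_traversal[OF c(1)] start_in_Ev c(2)
        by (auto simp: visits_def)
    qed
    thus "y \<in> vertices - {dep start}"
      using first_traversal(1)[OF c(1)] c(2) by (auto simp: walk_vertices_def)
  qed
  moreover have "inj_on ?y edges"
  proof (rule inj_onI)
    fix c c' assume c: "c \<in> edges" and c': "c' \<in> edges" and eq: "?y c = ?y c'"
    have "\<not> first_traversal c < first_traversal c'"
      using no_visit_before_first_traversal[OF c', of "first_traversal c"] first_traversal(1)[OF c] eq
      by (auto simp: visits_def)
    moreover have "\<not> first_traversal c' < first_traversal c"
      using no_visit_before_first_traversal[OF c, of "first_traversal c'"] first_traversal(1)[OF c'] eq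
      by (auto simp: visits_def)
    ultimately have "first_traversal c = first_traversal c'" by linarith
    thus "c = c'" using first_traversal(3)[OF c] first_traversal(3)[OF c'] by metis
  qed
  ultimately have "card edges \<le> card (vertices - {dep start})"
    using finite_vertices by (intro card_inj_on_le) (auto simp: walk_vertices_def)
  moreover have "dep start \<in> vertices" using start_in_Ev by (simp add: walk_vertices_def)
  hence "card (vertices - {dep start}) = card vertices - 1" by (rule card_Diff_singleton)
  moreover have "0 < card vertices"
    using \<open>dep start \<in> vertices\<close> finite_vertices card_gt_0_iff by (auto simp: walk_vertices_def)
  ultimately show ?thesis by linarith
qed

theorem card_edges: "card edges + 1 = card vertices"
  using card_edges_le card_vertices_le by simp

end

lemma is_factor_Cons_iff:
  "is_factor u (a # x) \<longleftrightarrow> (\<exists>i\<ge>1. seg u i (length x) = x \<and> u (i - 1) = a)"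
proof
  assume "is_factor u (a # x)"
  then obtain q where "a # x = seg u q (Suc (length x))" by (auto simp: is_factor_iff_seg)
  thus "\<exists>i\<ge>1. seg u i (length x) = x \<and> u (i - 1) = a"
    by (intro exI[of _ "Suc q"]) (simp add: seg_Suc_Cons)
next
  assume "\<exists>i\<ge>1. seg u i (length x) = x \<and> u (i - 1) = a"
  then obtain i where "i \<ge> 1" "seg u i (length x) = x" "u (i - 1) = a" by auto
  hence "seg u (i - 1) (length (a # x)) = a # x" by (simp add: seg_Suc_Cons)
  thus "is_factor u (a # x)" by (metis is_factor_iff_seg)
qed

lemma is_factor_snoc_iff:
  "is_factor u (x @ [b]) \<longleftrightarrow> (\<exists>i. seg u i (length x) = x \<and> u (i + length x) = b)"
  by (simp add: is_factor_iff_seg seg_Suc) (metis append1_eq_conv)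

lemma is_factor_Cons_snoc_iff:
  "is_factor u (a # x @ [b]) \<longleftrightarrow>
     (\<exists>i\<ge>1. seg u i (length x) = x \<and> u (i - 1) = a \<and> u (i + length x) = b)"
  by (simp add: is_factor_Cons_iff seg_Suc) (metis append1_eq_conv)

lemma is_factor_rev_iff: "closed_under_reversal u \<Longrightarrow> is_factor u (rev x) \<longleftrightarrow> is_factor u x"
  unfolding closed_under_reversal_def by (metis rev_rev_ident)

lemma ext_left_eq: "ext_left u w = {u (i - 1) | i. 1 \<le> i \<and> seg u i (length w) = w}"
  by (auto simp: ext_left_def is_factor_Cons_iff)

lemma ext_right_eq: "ext_right u w = {u (i + length w) | i. seg u i (length w) = w}"
  by (auto simp: ext_right_def is_factor_snoc_iff)

lemma ext_both_eq:
  "ext_both u w = {(u (i - 1), u (i + length w)) | i. 1 \<le> i \<and> seg u i (length w) = w}"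
  by (auto simp: ext_both_def is_factor_Cons_snoc_iff)

lemma ext_left_rev: "closed_under_reversal u \<Longrightarrow> ext_left u (rev w) = ext_right u w"
  using is_factor_rev_iff[of u "w @ [_]"] by (auto simp: ext_left_def ext_right_def)

lemma ext_right_rev: "closed_under_reversal u \<Longrightarrow> ext_right u (rev w) = ext_left u w"
  using is_factor_rev_iff[of u "_ # w"] by (auto simp: ext_left_def ext_right_def)

lemma ext_both_rev:
  "closed_under_reversal u \<Longrightarrow> (b, a) \<in> ext_both u (rev w) \<longleftrightarrow> (a, b) \<in> ext_both u w"
  using is_factor_rev_iff[of u "a # w @ [b]"] by (simp add: ext_both_def)

lemma finite_ext_left: "finite A \<Longrightarrow> \<forall>i. u i \<in> A \<Longrightarrow> finite (ext_left u w)"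
  by (rule finite_subset[of _ A]) (auto simp: ext_left_eq)

lemma finite_ext_right: "finite A \<Longrightarrow> \<forall>i. u i \<in> A \<Longrightarrow> finite (ext_right u w)"
  by (rule finite_subset[of _ A]) (auto simp: ext_right_eq)

lemma finite_ext_both: "finite A \<Longrightarrow> \<forall>i. u i \<in> A \<Longrightarrow> finite (ext_both u w)"
  by (rule finite_subset[of _ "A \<times> A"]) (auto simp: ext_both_eq)

section \<open>Bilateral multiplicity of long bispecial factors\<close>

text \<open>Occurrences at position \<open>0\<close> are left out: they have no left extension.\<close>
definition mirror_occs :: "(nat \<Rightarrow> 'a) \<Rightarrow> 'a list \<Rightarrow> nat set" where
  "mirror_occs u w = {i. 1 \<le> i \<and> mirror_occ u w i}"

lemma mem_mirror_occs_iff: "i \<in> mirror_occs u w \<longleftrightarrow> 1 \<le> i \<and> seg u i (length w) \<in> {w, rev w}"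
  by (simp add: mirror_occs_def mirror_occ_def)

text \<open>The walk steps from \<open>dep i\<close> to \<open>arr i\<close> at each occurrence \<open>i\<close> of \<open>w\<close> or \<open>rev w\<close>. Both walk
  axioms come from the palindromicity of complete return words, applied to \<open>w\<close> for \<open>chain\<close> and to
  the left-extended factor \<open>u (d - 1) # seg u d (length w)\<close> for \<open>retrace\<close>.\<close>
context
  fixes u :: "nat \<Rightarrow> 'a" and w :: "'a list" and n0 :: nat and dep arr :: "nat \<Rightarrow> 'v"
  assumes rich: "rich_occurrences_beyond u n0" and long: "n0 < length w"
    and dep_eq: "\<And>i d. i \<in> mirror_occs u w \<Longrightarrow> d \<in> mirror_occs u w \<Longrightarrow>
      dep i = dep d \<longleftrightarrow> seg u (i - 1) (Suc (length w)) = u (d - 1) # seg u d (length w)"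
    and arr_eq: "\<And>i d. i \<in> mirror_occs u w \<Longrightarrow> d \<in> mirror_occs u w \<Longrightarrow>
      arr i = dep d \<longleftrightarrow> seg u i (Suc (length w)) = rev (seg u d (length w)) @ [u (d - 1)]"
    and link: "\<And>i j. i \<in> mirror_occs u w \<Longrightarrow> j \<in> mirror_occs u w \<Longrightarrow>
      seg u j (length w) = rev (seg u i (length w)) \<Longrightarrow> u (i + length w) = u (j - 1) \<Longrightarrow>
      arr i = dep j"
begin

lemma mirror_occs_chain:
  assumes ij: "i \<in> mirror_occs u w" "j \<in> mirror_occs u w" "i < j"
    and none: "{i<..<j} \<inter> mirror_occs u w = {}"
  shows "arr i = dep j"
proof -
  define x where "x = seg u i (length w)"
  have x: "x \<in> {w, rev w}" using ij(1) by (simp add: mem_mirror_occs_iff x_def)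
  have "\<not> mirror_occ u x k" if "i < k" "k < j" for k
    using ij none that mirror_occ_cong[OF x] by (auto simp: mirror_occs_def)
  hence "seg u j (length x) = rev x" "u (i + length x) = u (j - 1)"
    using next_mirror_occ[OF rich, of x i j] ij mirror_occ_cong[OF x] long
    by (auto simp: mirror_occs_def x_def)
  thus "arr i = dep j" using link[OF ij(1,2)] by (simp add: x_def)
qed

lemma mirror_occs_retrace:
  assumes de: "d \<in> mirror_occs u w" "e \<in> mirror_occs u w" "d < e" "dep d \<in> {dep e, arr e}"
  shows "\<exists>j\<in>mirror_occs u w. d \<le> j \<and> arr j = dep d \<and> dep j = arr d \<and>
      (\<forall>k\<in>mirror_occs u w. d < k \<longrightarrow> k < j \<longrightarrow> dep d \<notin> {dep k, arr k})"
proof -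
  define n where "n = length w"
  define v where "v = u (d - 1) # seg u d n"
  have "1 \<le> d" using de(1) by (simp add: mirror_occs_def)
  hence v_at: "seg u (d - 1) (length v) = v" by (simp add: v_def seg_Suc_Cons)
  have occ_iff: "mirror_occ u v p \<longleftrightarrow> seg u p (Suc n) \<in> {v, rev v}" for p
    by (simp add: mirror_occ_def v_def)
  have dep_occ: "dep k = dep d \<Longrightarrow> mirror_occ u v (k - 1)" if "k \<in> mirror_occs u w" for k
    using dep_eq[OF that de(1)] unfolding occ_iff by (simp add: v_def n_def)
  have arr_occ: "arr k = dep d \<Longrightarrow> mirror_occ u v k" if "k \<in> mirror_occs u w" for k
    using arr_eq[OF that de(1)] unfolding occ_iff by (simp add: v_def n_def)
  obtain p where "d - 1 < p" "mirror_occ u v p"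
  proof (cases "dep e = dep d")
    case True
    thus thesis using that[of "e - 1"] dep_occ[OF de(2)] de(3) \<open>1 \<le> d\<close> by simp
  next
    case False
    thus thesis using that[of e] arr_occ[OF de(2)] de(3,4) by auto
  qed
  then obtain j where j: "d - 1 < j" "seg u j (length v) = rev v" "u (d - 1 + length v) = u (j - 1)"
    and between: "\<And>k. d - 1 < k \<Longrightarrow> k < j \<Longrightarrow> \<not> mirror_occ u v k"
    using first_mirror_occ_after[OF rich _ v_at] long by (auto simp: v_def n_def)
  have j_seg: "seg u j n = rev (seg u d n)"
    using j(2) by (simp add: v_def seg_Suc)
  have "j \<in> mirror_occs u w"
    using j(1) j_seg de(1) by (auto simp: mem_mirror_occs_iff n_def)
  moreover have "arr j = dep d"
    using arr_eq[OF \<open>j \<in> mirror_occs u w\<close> de(1)] j(2) by (simp add: v_def n_def)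
  moreover have "dep j = arr d"
    using link[OF de(1) \<open>j \<in> mirror_occs u w\<close>] j_seg j(3) \<open>1 \<le> d\<close> by (simp add: v_def n_def)
  moreover have "dep d \<notin> {dep k, arr k}" if "k \<in> mirror_occs u w" "d < k" "k < j" for k
    using between[of "k - 1"] between[of k] dep_occ[OF that(1)] arr_occ[OF that(1)] that \<open>1 \<le> d\<close>
    by auto
  ultimately show ?thesis using j(1) by (intro bexI[of _ j]) auto
qed

lemma tree_walk_mirror_occs:
  assumes "mirror_occs u w \<noteq> {}" and "finite (dep ` mirror_occs u w \<union> arr ` mirror_occs u w)"
  shows "tree_walk (mirror_occs u w) dep arr"
  using assms mirror_occs_chain mirror_occs_retrace by unfold_locales

end

lemma card_sym_rel:

  assumes "finite E" and sym: "\<And>a b. (a, b) \<in> E \<Longrightarrow> (b, a) \<in> E"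
  shows "card E = card {a. (a, a) \<in> E} + 2 * card {{a, b} | a b. (a, b) \<in> E \<and> a \<noteq> b}"
proof -
  define C where "C = {{a, b} | a b. (a, b) \<in> E \<and> a \<noteq> b}"
  define F where "F c = {p \<in> E. fst p \<noteq> snd p \<and> {fst p, snd p} = c}" for c
  define Diag where "Diag = {p \<in> E. fst p = snd p}"
  have "finite C"
  proof -
    have "C = (\<lambda>p. {fst p, snd p}) ` {p \<in> E. fst p \<noteq> snd p}" by (force simp: C_def)
    thus ?thesis using \<open>finite E\<close> by simp
  qed
  have fin_F: "finite (F c)" for c using \<open>finite E\<close> by (simp add: F_def)
  have card_F: "card (F c) = 2" if c: "c \<in> C" for c
  proof -
    obtain a b where "c = {a, b}" "(a, b) \<in> E" "a \<noteq> b" using c by (auto simp: C_def)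
    hence "F c = {(a, b), (b, a)}" using sym by (auto simp: F_def doubleton_eq_iff)
    thus ?thesis using \<open>a \<noteq> b\<close> by simp
  qed
  have "Diag = (\<lambda>a. (a, a)) ` {a. (a, a) \<in> E}" by (auto simp: Diag_def)
  hence card_Diag: "card Diag = card {a. (a, a) \<in> E}" by (simp add: card_image inj_on_def)
  have E_eq: "E = Diag \<union> (\<Union>c\<in>C. F c)" by (fastforce simp: Diag_def C_def F_def)
  have "card E = card Diag + card (\<Union>c\<in>C. F c)"
    by (subst E_eq, rule card_Un_disjoint) (use \<open>finite E\<close> \<open>finite C\<close> fin_F in \<open>auto simp: Diag_def F_def\<close>)
  also have "card (\<Union>c\<in>C. F c) = (\<Sum>c\<in>C. card (F c))"
    using \<open>finite C\<close> fin_F by (intro card_UN_disjoint) (auto simp: F_def)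
  also have "\<dots> = 2 * card C" using card_F by simp
  finally show ?thesis using card_Diag by (simp add: C_def)
qed

lemma palindrome_walk_vertices:
  assumes "closed_under_reversal u" and "rev w = w"
  shows "(\<lambda>i. u (i - 1)) ` mirror_occs u w \<union> (\<lambda>i. u (i + length w)) ` mirror_occs u w = ext_left u w"
proof -
  have "ext_right u w = ext_left u w" using ext_right_rev[OF assms(1), of w] assms(2) by simp
  thus ?thesis using assms(2) by (auto simp: mem_mirror_occs_iff ext_left_eq ext_right_eq)
qed

lemma tree_walk_palindrome:
  assumes "rich_occurrences_beyond u n0" and "n0 < length w" and pal: "rev w = w"
    and "mirror_occs u w \<noteq> {}"
    and "finite ((\<lambda>i. u (i - 1)) ` mirror_occs u w \<union> (\<lambda>i. u (i + length w)) ` mirror_occs u w)"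
  shows "tree_walk (mirror_occs u w) (\<lambda>i. u (i - 1)) (\<lambda>i. u (i + length w))"
proof (rule tree_walk_mirror_occs[OF assms(1,2) _ _ _ assms(4,5)])
  fix i d assume "i \<in> mirror_occs u w" "d \<in> mirror_occs u w"
  thus "u (i - 1) = u (d - 1) \<longleftrightarrow> seg u (i - 1) (Suc (length w)) = u (d - 1) # seg u d (length w)"
    using pal by (auto simp: mem_mirror_occs_iff seg_Suc_Cons)
  show "u (i + length w) = u (d - 1) \<longleftrightarrow>
      seg u i (Suc (length w)) = rev (seg u d (length w)) @ [u (d - 1)]"
    using \<open>i \<in> mirror_occs u w\<close> \<open>d \<in> mirror_occs u w\<close> pal
    by (auto simp: mem_mirror_occs_iff seg_Suc)
qed

text \<open>For a palindrome, the walk is on the letters extending \<open>w\<close>, and its edges are the unordered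
  bilateral extensions \<open>{a, b}\<close> with \<open>a \<noteq> b\<close>; the pairs \<open>(a, a)\<close> are the loops.\<close>
lemma bilateral_mult_palindrome:
  assumes "finite A" and "\<forall>i. u i \<in> A" and cr: "closed_under_reversal u"
    and rich: "rich_occurrences_beyond u n0" and "bispecial u w" and "n0 < length w"
    and pal: "rev w = w"
  shows "bilateral_mult u w = int (card (ext_eq u w)) - 1"
proof -
  note vertices = palindrome_walk_vertices[OF cr pal]
  have "ext_left u w \<noteq> {}" using \<open>bispecial u w\<close> by (auto simp: bispecial_def)
  hence "mirror_occs u w \<noteq> {}" using vertices by auto
  moreover have "finite ((\<lambda>i. u (i - 1)) ` mirror_occs u w \<union> (\<lambda>i. u (i + length w)) ` mirror_occs u w)"
    unfolding vertices by (rule finite_ext_left[OF assms(1,2)])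
  ultimately interpret tree_walk "mirror_occs u w" "\<lambda>i. u (i - 1)" "\<lambda>i. u (i + length w)"
    by (rule tree_walk_palindrome[OF rich \<open>n0 < length w\<close> pal])
  have "edges = {{a, b} | a b. (a, b) \<in> ext_both u w \<and> a \<noteq> b}"
    unfolding walk_edges_def using pal by (auto simp: ext_both_eq mem_mirror_occs_iff)
  moreover have "(b, a) \<in> ext_both u w" if "(a, b) \<in> ext_both u w" for a b
    using that ext_both_rev[OF cr, where w = w] pal by simp
  hence "card (ext_both u w) =
      card (ext_eq u w) + 2 * card {{a, b} | a b. (a, b) \<in> ext_both u w \<and> a \<noteq> b}"
    using card_sym_rel[OF finite_ext_both[OF assms(1,2)]] by (simp add: ext_eq_def ext_both_def)
  moreover have "ext_right u w = ext_left u w" using ext_right_rev[OF cr, of w] pal by simp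
  ultimately show ?thesis
    using card_edges vertices unfolding walk_vertices_def by (simp add: bilateral_mult_def)
qed

text \<open>For a non-palindrome, a letter extending \<open>w\<close> on the left is tagged \<open>True\<close> and one extending it
  on the right \<open>False\<close>; an occurrence of \<open>rev w\<close> contributes its extensions reflected.\<close>
definition tagged_left_ext :: "(nat \<Rightarrow> 'a) \<Rightarrow> 'a list \<Rightarrow> nat \<Rightarrow> bool \<times> 'a" where
  "tagged_left_ext u w i = (seg u i (length w) = w, u (i - 1))"

definition tagged_right_ext :: "(nat \<Rightarrow> 'a) \<Rightarrow> 'a list \<Rightarrow> nat \<Rightarrow> bool \<times> 'a" where
  "tagged_right_ext u w i = (seg u i (length w) \<noteq> w, u (i + length w))"

lemma tagged_walk_vertices:
  assumes cr: "closed_under_reversal u" and nonpal: "rev w \<noteq> w"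
  shows "tagged_left_ext u w ` mirror_occs u w \<union> tagged_right_ext u w ` mirror_occs u w =
    {True} \<times> ext_left u w \<union> {False} \<times> ext_right u w"
proof
  have left: "u (i - 1) \<in> ext_left u x" and right: "u (i + length w) \<in> ext_right u x"
    if "1 \<le> i" "seg u i (length w) = x" for i x
    using that by (auto simp: ext_left_eq ext_right_eq)
  show "tagged_left_ext u w ` mirror_occs u w \<union> tagged_right_ext u w ` mirror_occs u w \<subseteq>
      {True} \<times> ext_left u w \<union> {False} \<times> ext_right u w"
    using nonpal left[of _ w] right[of _ w] left[of _ "rev w"] right[of _ "rev w"]
    unfolding ext_left_rev[OF cr] ext_right_rev[OF cr]
    by (auto simp: mem_mirror_occs_iff tagged_left_ext_def tagged_right_ext_def)
  have "(True, a) \<in> tagged_left_ext u w ` mirror_occs u w" if "a \<in> ext_left u w" for a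
    using that by (auto simp: mem_mirror_occs_iff tagged_left_ext_def ext_left_eq image_iff)
  moreover have "(False, b) \<in> tagged_left_ext u w ` mirror_occs u w" if "b \<in> ext_right u w" for b
  proof -
    have "b \<in> ext_left u (rev w)" using that ext_left_rev[OF cr] by simp
    then obtain i where "1 \<le> i" "seg u i (length w) = rev w" "u (i - 1) = b"
      by (auto simp: ext_left_eq)
    hence "i \<in> mirror_occs u w" "tagged_left_ext u w i = (False, b)"
      using nonpal by (auto simp: mem_mirror_occs_iff tagged_left_ext_def)
    thus ?thesis by force
  qed
  ultimately show "{True} \<times> ext_left u w \<union> {False} \<times> ext_right u w \<subseteq>
      tagged_left_ext u w ` mirror_occs u w \<union> tagged_right_ext u w ` mirror_occs u w"
    by blast
qed

lemma tree_walk_tagged: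
  assumes "rich_occurrences_beyond u n0" and "n0 < length w" and nonpal: "rev w \<noteq> w"
    and "mirror_occs u w \<noteq> {}"
    and "finite (tagged_left_ext u w ` mirror_occs u w \<union> tagged_right_ext u w ` mirror_occs u w)"
  shows "tree_walk (mirror_occs u w) (tagged_left_ext u w) (tagged_right_ext u w)"
proof (rule tree_walk_mirror_occs[OF assms(1,2) _ _ _ assms(4,5)])
  fix i d assume i: "i \<in> mirror_occs u w" and d: "d \<in> mirror_occs u w"
  have "(seg u i (length w) = w \<longleftrightarrow> seg u d (length w) = w) \<longleftrightarrow>
      seg u i (length w) = seg u d (length w)"
    using i d nonpal unfolding mem_mirror_occs_iff by (metis insertE rev_swap singletonD)
  thus "tagged_left_ext u w i = tagged_left_ext u w d \<longleftrightarrow>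
      seg u (i - 1) (Suc (length w)) = u (d - 1) # seg u d (length w)"
    using i by (auto simp: mem_mirror_occs_iff tagged_left_ext_def seg_Suc_Cons)
  show "tagged_right_ext u w i = tagged_left_ext u w d \<longleftrightarrow>
      seg u i (Suc (length w)) = rev (seg u d (length w)) @ [u (d - 1)]"
    using i d nonpal
    by (auto simp: mem_mirror_occs_iff tagged_left_ext_def tagged_right_ext_def seg_Suc)
next
  fix i j assume "i \<in> mirror_occs u w" "j \<in> mirror_occs u w"
    "seg u j (length w) = rev (seg u i (length w))" "u (i + length w) = u (j - 1)"
  thus "tagged_right_ext u w i = tagged_left_ext u w j"
    using nonpal by (auto simp: mem_mirror_occs_iff tagged_left_ext_def tagged_right_ext_def)
qed

lemma tagged_walk_edges:
  assumes cr: "closed_under_reversal u" and nonpal: "rev w \<noteq> w"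
  shows "walk_edges (mirror_occs u w) (tagged_left_ext u w) (tagged_right_ext u w) =
    (\<lambda>(a, b). {(True, a), (False, b)}) ` ext_both u w" (is "?E = ?g ` _")
proof
  have both: "(u (i - 1), u (i + length w)) \<in> ext_both u x"
    if "1 \<le> i" "seg u i (length w) = x" for i x
    using that by (auto simp: ext_both_eq)
  show "?E \<subseteq> ?g ` ext_both u w"
  proof
    fix c assume "c \<in> ?E"
    then obtain i where "i \<in> mirror_occs u w" and c: "c = {tagged_left_ext u w i, tagged_right_ext u w i}"
      unfolding walk_edges_def by auto
    hence i: "1 \<le> i" "seg u i (length w) \<in> {w, rev w}" "c = {tagged_left_ext u w i, tagged_right_ext u w i}"
      by (simp_all add: mem_mirror_occs_iff)
    show "c \<in> ?g ` ext_both u w"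
    proof (cases "seg u i (length w) = w")
      case True
      hence "c = {(True, u (i - 1)), (False, u (i + length w))}"
        using i by (simp add: tagged_left_ext_def tagged_right_ext_def)
      thus ?thesis using both[OF i(1) True] by force
    next
      case False
      hence "seg u i (length w) = rev w" using i by simp
      hence "(u (i - 1), u (i + length w)) \<in> ext_both u (rev w)" using both i(1) by blast
      hence "(u (i + length w), u (i - 1)) \<in> ext_both u w" by (rule ext_both_rev[OF cr, THEN iffD1])
      moreover have "c = {(True, u (i + length w)), (False, u (i - 1))}"
        using i False by (auto simp: tagged_left_ext_def tagged_right_ext_def)
      ultimately show ?thesis by force
    qed
  qed
  show "?g ` ext_both u w \<subseteq> ?E"
  proof
    fix c assume "c \<in> ?g ` ext_both u w"
    then obtain i where "1 \<le> i" "seg u i (length w) = w"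
      "c = {(True, u (i - 1)), (False, u (i + length w))}"
      by (auto simp: ext_both_eq)
    hence "i \<in> mirror_occs u w" "c = {tagged_left_ext u w i, tagged_right_ext u w i}"
      "tagged_left_ext u w i \<noteq> tagged_right_ext u w i"
      by (auto simp: mem_mirror_occs_iff tagged_left_ext_def tagged_right_ext_def)
    thus "c \<in> ?E" by (auto simp: walk_edges_def)
  qed
qed

lemma bilateral_mult_non_palindrome:
  assumes "finite A" and "\<forall>i. u i \<in> A" and cr: "closed_under_reversal u"
    and rich: "rich_occurrences_beyond u n0" and "bispecial u w" and "n0 < length w"
    and nonpal: "rev w \<noteq> w"
  shows "bilateral_mult u w = 0"
proof -
  note vertices = tagged_walk_vertices[OF cr nonpal]
  have "ext_left u w \<noteq> {}" using \<open>bispecial u w\<close> by (auto simp: bispecial_def)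
  hence "mirror_occs u w \<noteq> {}" using vertices by auto
  moreover have "finite (tagged_left_ext u w ` mirror_occs u w \<union> tagged_right_ext u w ` mirror_occs u w)"
    unfolding vertices using finite_ext_left[OF assms(1,2)] finite_ext_right[OF assms(1,2)] by simp
  ultimately interpret tree_walk "mirror_occs u w" "tagged_left_ext u w" "tagged_right_ext u w"
    by (rule tree_walk_tagged[OF rich \<open>n0 < length w\<close> nonpal])
  have "inj_on (\<lambda>(a, b). {(True, a), (False, b)}) (ext_both u w)"
  proof (rule inj_onI, clarify)
    fix a b a' b' assume eq: "{(True, a), (False, b)} = {(True, a'), (False, b')}"
    show "a = a' \<and> b = b'"
      using eq[THEN equalityD1, THEN subsetD, of "(True, a)"]
        eq[THEN equalityD1, THEN subsetD, of "(False, b)"] by simp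
  qed
  hence "card edges = card (ext_both u w)"
    by (simp add: tagged_walk_edges[OF cr nonpal] card_image)
  moreover have "card vertices = card ({True} \<times> ext_left u w) + card ({False} \<times> ext_right u w)"
    unfolding walk_vertices_def vertices
    by (rule card_Un_disjoint) (use finite_ext_left[OF assms(1,2)] finite_ext_right[OF assms(1,2)] in auto)
  ultimately show ?thesis using card_edges by (simp add: bilateral_mult_def card_cartesian_product)
qed

theorem theorem21:
  fixes u :: "nat \<Rightarrow> 'a" and A :: "'a set"
  assumes "finite A"
    and "\<forall>i. u i \<in> A"
    and "closed_under_reversal u"
    and "finite_defect u"
  shows "\<exists>K::nat. \<forall>w. bispecial u w \<and> length w \<ge> K \<longrightarrow>
           (w \<noteq> rev w \<longrightarrow> bilateral_mult u w = 0) \<and>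
           (w = rev w \<longrightarrow> bilateral_mult u w = int (card (ext_eq u w)) - 1)"
proof -
  obtain n0 where rich: "rich_occurrences_beyond u n0"
    using rich_occurrences_beyond_if_finite_defect[OF assms(4)] by blast
  show ?thesis
  proof (rule exI[of _ "Suc n0"], intro allI impI conjI)
    fix w assume w: "bispecial u w \<and> Suc n0 \<le> length w"
    hence "n0 < length w" by simp
    show "w \<noteq> rev w \<Longrightarrow> bilateral_mult u w = 0"
      using bilateral_mult_non_palindrome[OF assms(1-3) rich _ \<open>n0 < length w\<close>] w by metis
    show "w = rev w \<Longrightarrow> bilateral_mult u w = int (card (ext_eq u w)) - 1"
      using bilateral_mult_palindrome[OF assms(1-3) rich _ \<open>n0 < length w\<close>] w by metis
  qed
qed

end
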